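(* Let $P$ be an $r$-differential poset with rank sizes $p_n$. Suppose that (a) for every $n\ge1$ and every $1\le j\le n$ one has $\Delta p_n\ge \Delta p_{n-j-\delta_{r,1}}$, and (b) for every $n\ge 0$ the matrix $DU_n+tI\in\mathbb{Z}[t]^{p_n\times p_n}$ has a Smith form over $\mathbb{Z}[t]$. Then for every $n\ge0$ the cokernel of $U_n:\mathbb{Z}^{p_n}\to\mathbb{Z}^{p_{n+1}}$ is a free abelian group (equivalently, the Smith form of $U_n$ over $\mathbb{Z}$ has only zeroes and ones on its diagonal).
   Context: For a positive integer $r$, an $r$-differential poset is a graded poset with a minimum element, all of whose intervals and rank sets are finite, such that (D1) if an element covers exactly $m$ elements then it is covered by exactly $m+r$ elements, and (D2) if two distinct elements have exactly $m$ elements that they both cover, then exactly $m$ elements cover them both. $P_n$ is the set of elements of rank $n$, $p_n:=|P_n|$, $p_k:=0$ for $k<0$, $\Delta p_n:=p_n-p_{n-1}$, and $\delta_{r,1}$ is the Kronecker delta. The up map $U_n:\mathbb{Z}^{P_n}\to\mathbb{Z}^{P_{n+1}}$ sends each basis element $x$ to the sum of the elements covering $x$; the down map $D_n:\mathbb{Z}^{P_n}\to\mathbb{Z}^{P_{n-1}}$ sends $x$ to the sum of the elements covered by $x$; $DU_n:=D_{n+1}U_n$ as a $p_n\times p_n$ integer matrix. A matrix over a commutative ring $S$ is in Smith form if it is diagonal with diagonal entries $s_1,s_2,\dots$ satisfying $s_i\mid s_{i+1}$; it has a Smith form over $S$ if it becomes one after multiplication on the left and right by invertible matrices over $S$. 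*)

theory Defs
  imports "Jordan_Normal_Form.Matrix" "HOL-Computational_Algebra.Polynomial"
begin

text \<open>The poset is the whole carrier of a type of class order.\<close>

definition covers :: "'a::order \<Rightarrow> 'a \<Rightarrow> bool" where
  "covers y x \<longleftrightarrow> x < y \<and> \<not> (\<exists>z. x < z \<and> z < y)"

definition rank_set :: "('a \<Rightarrow> nat) \<Rightarrow> nat \<Rightarrow> 'a set" where
  "rank_set rk n = {x. rk x = n}"

definition graded_poset_min :: "('a::order \<Rightarrow> nat) \<Rightarrow> bool" where
  "graded_poset_min rk \<longleftrightarrow>
     (\<exists>m. (\<forall>x. m \<le> x) \<and> rk m = 0) \<and>
     (\<forall>x y::'a. finite {z. x \<le> z \<and> z \<le> y}) \<and>
     (\<forall>x y. covers y x \<longrightarrow> rk y = Suc (rk x)) \<and>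
     (\<forall>n. finite (rank_set rk n))"

definition differential_poset :: "nat \<Rightarrow> ('a::order \<Rightarrow> nat) \<Rightarrow> bool" where
  "differential_poset r rk \<longleftrightarrow> r > 0 \<and> graded_poset_min rk \<and>
     (\<forall>x::'a. card {y. covers y x} = card {y. covers x y} + r) \<and>
     (\<forall>x y::'a. x \<noteq> y \<longrightarrow>
        card {z. covers z x \<and> covers z y} = card {z. covers x z \<and> covers y z})"

definition rank_size :: "('a \<Rightarrow> nat) \<Rightarrow> int \<Rightarrow> int" where
  "rank_size rk k = (if k < 0 then 0 else int (card (rank_set rk (nat k))))"

definition delta_p :: "('a \<Rightarrow> nat) \<Rightarrow> int \<Rightarrow> int" where
  "delta_p rk k = rank_size rk k - rank_size rk (k - 1)"

text \<open>A fixed enumeration of the rank set P_n (basis ordering of Z^{P_n}).\<close>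
definition rank_enum :: "('a \<Rightarrow> nat) \<Rightarrow> nat \<Rightarrow> nat \<Rightarrow> 'a" where
  "rank_enum rk n = (SOME f. bij_betw f {..<card (rank_set rk n)} (rank_set rk n))"

definition U_mat :: "('a::order \<Rightarrow> nat) \<Rightarrow> nat \<Rightarrow> int mat" where
  "U_mat rk n = mat (card (rank_set rk (Suc n))) (card (rank_set rk n))
     (\<lambda>(i,j). if covers (rank_enum rk (Suc n) i) (rank_enum rk n j) then 1 else 0)"

text \<open>D_{n+1} : Z^{P_{n+1}} -> Z^{P_n}.\<close>
definition D_mat :: "('a::order \<Rightarrow> nat) \<Rightarrow> nat \<Rightarrow> int mat" where
  "D_mat rk n = mat (card (rank_set rk n)) (card (rank_set rk (Suc n)))
     (\<lambda>(i,j). if covers (rank_enum rk (Suc n) j) (rank_enum rk n i) then 1 else 0)"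

definition DU_mat :: "('a::order \<Rightarrow> nat) \<Rightarrow> nat \<Rightarrow> int mat" where
  "DU_mat rk n = D_mat rk n * U_mat rk n"

definition in_Smith_form :: "'a::comm_ring_1 mat \<Rightarrow> bool" where
  "in_Smith_form A \<longleftrightarrow>
     (\<forall>i j. i < dim_row A \<and> j < dim_col A \<and> i \<noteq> j \<longrightarrow> A $$ (i,j) = 0) \<and>
     (\<forall>i. Suc i < min (dim_row A) (dim_col A) \<longrightarrow> A $$ (i,i) dvd A $$ (Suc i, Suc i))"

definition has_Smith_form :: "'a::comm_ring_1 mat \<Rightarrow> bool" where
  "has_Smith_form A \<longleftrightarrow> (\<exists>P Q. P \<in> carrier_mat (dim_row A) (dim_row A) \<and>
     Q \<in> carrier_mat (dim_col A) (dim_col A) \<and> invertible_mat P \<and> invertible_mat Q \<and>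
     in_Smith_form (P * A * Q))"

end

theory Submission
  imports Defs "Jordan_Normal_Form.Char_Poly"
begin

text \<open>Axioms (D1) and (D2) say \<open>D\<^sub>n\<^sub>+\<^sub>1 U\<^sub>n\<^sub>+\<^sub>1 = U\<^sub>n D\<^sub>n\<^sub>+\<^sub>1 + rI\<close>. By induction on \<open>n\<close>, every
  eigenvalue of \<open>DU\<^sub>n\<close> is of the form \<open>r(k+1)\<close>, with multiplicity at most \<open>\<Delta>p\<^sub>n\<^sub>-\<^sub>k\<close>; in particular
  \<open>DU\<^sub>n\<close> and \<open>U\<^sub>n\<close> are injective. Let \<open>s\<close> be the invariant factor of index \<open>p\<^sub>n\<close> of the pencil
  \<open>DU\<^sub>n\<^sub>+\<^sub>1 + tI\<close>. A complex root \<open>z\<close> of \<open>s\<close> is a root of all later invariant factors, which yields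
  an eigenspace of \<open>DU\<^sub>n\<^sub>+\<^sub>1\<close> for \<open>-z\<close> of dimension \<open>\<Delta>p\<^sub>n\<^sub>+\<^sub>1 + 1\<close>; the growth condition (a) leaves
  only \<open>r = 1\<close>, \<open>z = -2\<close>. As \<open>s\<close> has unit leading coefficient, this gives \<open>s(-r) = \<plusminus>1\<close>. Evaluating
  the Smith decomposition at \<open>t = -r\<close> turns the pencil into \<open>U\<^sub>n D\<^sub>n\<^sub>+\<^sub>1\<close> with its first \<open>p\<^sub>n\<close>
  invariant factors units, and this forces the Smith form of \<open>U\<^sub>n\<close> to be \<open>[I; 0]\<close>.\<close>

section \<open>Linear algebra\<close>

definition inj_mat :: "'a::semiring_0 mat \<Rightarrow> bool" where
  "inj_mat V \<longleftrightarrow>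
     (\<forall>a \<in> carrier_vec (dim_col V). V *\<^sub>v a = 0\<^sub>v (dim_row V) \<longrightarrow> a = 0\<^sub>v (dim_col V))"

definition eigen_block :: "'a::field mat \<Rightarrow> 'a \<Rightarrow> 'a mat \<Rightarrow> bool" where
  "eigen_block A lam V \<longleftrightarrow> inj_mat V \<and> 0 < dim_col V \<and>
     (\<forall>a \<in> carrier_vec (dim_col V). A *\<^sub>v (V *\<^sub>v a) = lam \<cdot>\<^sub>v (V *\<^sub>v a))"

lemma inj_matD:
  "inj_mat V \<Longrightarrow> V \<in> carrier_mat p c \<Longrightarrow> a \<in> carrier_vec c \<Longrightarrow> V *\<^sub>v a = 0\<^sub>v p \<Longrightarrow> a = 0\<^sub>v c"
  unfolding inj_mat_def by auto

lemma inj_matI: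
  "V \<in> carrier_mat p c \<Longrightarrow> (\<And>a. a \<in> carrier_vec c \<Longrightarrow> V *\<^sub>v a = 0\<^sub>v p \<Longrightarrow> a = 0\<^sub>v c) \<Longrightarrow> inj_mat V"
  unfolding inj_mat_def by auto

lemma mult_mat_vec_zero: "A \<in> carrier_mat nr nc \<Longrightarrow> A *\<^sub>v 0\<^sub>v nc = (0\<^sub>v nr :: 'a::semiring_0 vec)"
  by (intro eq_vecI) (auto simp: scalar_prod_def)

lemma zero_smult_vec: "w \<in> carrier_vec n \<Longrightarrow> (0::'a::comm_ring_1) \<cdot>\<^sub>v w = 0\<^sub>v n"
  by (intro eq_vecI) auto

lemma smult_one_mat_mult_vec:
  "v \<in> carrier_vec n \<Longrightarrow> (k \<cdot>\<^sub>m 1\<^sub>m n) *\<^sub>v v = k \<cdot>\<^sub>v (v :: 'a::comm_ring_1 vec)"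
  by (intro eq_vecI) (auto simp: scalar_prod_def sum.cong[OF refl, of _ "\<lambda>j. if _ = j then _ else 0"]
      if_distrib if_distribR cong: if_cong)

lemma smult_vec_cancel:
  fixes w :: "'f::field vec"
  assumes "k \<cdot>\<^sub>v w = l \<cdot>\<^sub>v w" "w \<in> carrier_vec n" "w \<noteq> 0\<^sub>v n"
  shows "k = l"
proof -
  obtain i where i: "i < n" "w $ i \<noteq> 0"
    using assms(2,3) by (metis eq_vecI carrier_vecD index_zero_vec)
  have "k * w $ i = l * w $ i"
    using arg_cong[OF assms(1), of "\<lambda>v. v $ i"] i assms(2) by simp
  with i(2) show ?thesis by simp
qed

lemma add_smult_vec_eq_imp:
  fixes X w :: "'f::field vec"
  assumes "X \<in> carrier_vec n" "w \<in> carrier_vec n" "X + k \<cdot>\<^sub>v w = l \<cdot>\<^sub>v w"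
  shows "X = (l - k) \<cdot>\<^sub>v w"
proof (rule eq_vecI)
  fix i assume "i < dim_vec ((l - k) \<cdot>\<^sub>v w)"
  hence i: "i < n" using assms by simp
  have "X $ i + k * w $ i = l * w $ i"
    using arg_cong[OF assms(3), of "\<lambda>v. v $ i"] i assms(1,2) by simp
  thus "X $ i = ((l - k) \<cdot>\<^sub>v w) $ i" using i assms by (simp add: algebra_simps)
qed (use assms in simp)

lemma mult_mat_vec_zero_append:
  fixes M :: "'a::semiring_0 mat"
  assumes M: "M \<in> carrier_mat p (j0 + c)" and a: "a \<in> carrier_vec c"
  shows "M *\<^sub>v (0\<^sub>v j0 @\<^sub>v a) = mat p c (\<lambda>(i, j). M $$ (i, j0 + j)) *\<^sub>v a"
proof (rule eq_vecI)
  fix i assume "i < dim_vec (mat p c (\<lambda>(i, j). M $$ (i, j0 + j)) *\<^sub>v a)"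
  hence i: "i < p" by simp
  have "row M i = vec_first (row M i) j0 @\<^sub>v vec_last (row M i) c"
    using M i by (intro vec_first_last_append[symmetric]) auto
  hence "(M *\<^sub>v (0\<^sub>v j0 @\<^sub>v a)) $ i = (vec_first (row M i) j0 @\<^sub>v vec_last (row M i) c) \<bullet> (0\<^sub>v j0 @\<^sub>v a)"
    using M i by simp
  also have "\<dots> = vec_first (row M i) j0 \<bullet> 0\<^sub>v j0 + vec_last (row M i) c \<bullet> a"
    by (rule scalar_prod_append[of _ j0 _ c]) (use a in auto)
  also have "vec_last (row M i) c = row (mat p c (\<lambda>(i, j). M $$ (i, j0 + j))) i"
    using M i by (intro eq_vecI) (auto simp: vec_last_def)
  finally show "(M *\<^sub>v (0\<^sub>v j0 @\<^sub>v a)) $ i = (mat p c (\<lambda>(i, j). M $$ (i, j0 + j)) *\<^sub>v a) $ i"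
    using i by simp
qed (use M in simp)

lemma inj_mat_dim_le:
  fixes V :: "'f::field mat"
  assumes V: "V \<in> carrier_mat p c" and inj: "inj_mat V"
  shows "c \<le> p"
proof (rule ccontr)
  assume "\<not> c \<le> p"
  hence pc: "p < c" by simp
  \<comment> \<open>pad \<open>V\<close> with zero rows to a singular square matrix and take a kernel vector\<close>
  define W where "W = mat\<^sub>r c c (\<lambda>i. if i = p then 0\<^sub>v c else if i < p then row V i else 0\<^sub>v c)"
  have Wc: "W \<in> carrier_mat c c" unfolding W_def by simp
  have "det W = 0" unfolding W_def
    by (rule det_row_0[OF pc]) (use V in auto)
  then obtain v where v: "v \<in> carrier_vec c" "v \<noteq> 0\<^sub>v c" "W *\<^sub>v v = 0\<^sub>v c"
    using det_0_iff_vec_prod_zero_field[OF Wc] by auto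
  have "V *\<^sub>v v = 0\<^sub>v p"
  proof (rule eq_vecI)
    fix i assume "i < dim_vec (0\<^sub>v p :: 'f vec)"
    hence i: "i < p" by simp
    have "(W *\<^sub>v v) $ i = row V i \<bullet> v" using i pc V by (simp add: W_def)
    with v(3) i pc show "(V *\<^sub>v v) $ i = 0\<^sub>v p $ i" using V by simp
  qed (use V in simp)
  with inj_matD[OF inj V v(1)] v(2) show False by blast
qed

lemma independent_blocks_dim_le:
  fixes V U :: "'f::field mat"
  assumes V: "V \<in> carrier_mat p c" and U: "U \<in> carrier_mat p q"
    and indep: "\<And>a b. a \<in> carrier_vec c \<Longrightarrow> b \<in> carrier_vec q \<Longrightarrow>
                  V *\<^sub>v a + U *\<^sub>v b = 0\<^sub>v p \<Longrightarrow> a = 0\<^sub>v c \<and> b = 0\<^sub>v q"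
  shows "c + q \<le> p"
proof (rule inj_mat_dim_le)
  define W where "W = mat\<^sub>r p (c + q) (\<lambda>i. row V i @\<^sub>v row U i)"
  show Wc: "W \<in> carrier_mat p (c + q)" unfolding W_def by simp
  have W_append: "W *\<^sub>v (a @\<^sub>v b) = V *\<^sub>v a + U *\<^sub>v b"
    if "a \<in> carrier_vec c" "b \<in> carrier_vec q" for a b
  proof (rule eq_vecI)
    fix i assume "i < dim_vec (V *\<^sub>v a + U *\<^sub>v b)"
    hence i: "i < p" using U by simp
    have "(row V i @\<^sub>v row U i) \<bullet> (a @\<^sub>v b) = row V i \<bullet> a + row U i \<bullet> b"
      by (rule scalar_prod_append) (use i V U that in auto)
    thus "(W *\<^sub>v (a @\<^sub>v b)) $ i = (V *\<^sub>v a + U *\<^sub>v b) $ i" using i V U that by (simp add: W_def)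
  qed (use V U in \<open>simp add: W_def\<close>)
  show "inj_mat W"
  proof (rule inj_matI[OF Wc])
    fix x :: "'f vec" assume x: "x \<in> carrier_vec (c + q)" and Wx: "W *\<^sub>v x = 0\<^sub>v p"
    define a where "a = vec_first x c"
    define b where "b = vec_last x q"
    have ab: "a \<in> carrier_vec c" "b \<in> carrier_vec q" and x_ab: "x = a @\<^sub>v b"
      using x by (auto simp: a_def b_def)
    with Wx indep W_append have "a = 0\<^sub>v c" "b = 0\<^sub>v q" by auto
    thus "x = 0\<^sub>v (c + q)" unfolding x_ab by (intro eq_vecI) auto
  qed
qed

lemma eigen_block_dim_le:
  "V \<in> carrier_mat p c \<Longrightarrow> eigen_block A lam V \<Longrightarrow> c \<le> p"
  unfolding eigen_block_def by (blast intro: inj_mat_dim_le)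

lemma eigen_block_single_column:
  fixes A :: "'f::field mat"
  assumes A: "A \<in> carrier_mat n n" and b: "b \<in> carrier_vec n" "b \<noteq> 0\<^sub>v n"
    and Ab: "A *\<^sub>v b = lam \<cdot>\<^sub>v b"
  shows "eigen_block A lam (mat n 1 (\<lambda>(i, _). b $ i))" (is "eigen_block A lam ?V")
proof -
  have Vc: "?V \<in> carrier_mat n 1" by simp
  have Va: "?V *\<^sub>v a = a $ 0 \<cdot>\<^sub>v b" if "a \<in> carrier_vec 1" for a
    by (rule eq_vecI) (use that b in \<open>auto simp: scalar_prod_def\<close>)
  have "inj_mat ?V"
  proof (rule inj_matI[OF Vc])
    fix a :: "'f vec" assume a: "a \<in> carrier_vec 1" and "?V *\<^sub>v a = 0\<^sub>v n"
    hence "a $ 0 \<cdot>\<^sub>v b = 0 \<cdot>\<^sub>v b" using Va zero_smult_vec[OF b(1)] by simp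
    hence "a $ 0 = 0" using smult_vec_cancel b by blast
    thus "a = 0\<^sub>v 1" using a by (intro eq_vecI) auto
  qed
  moreover have "A *\<^sub>v (?V *\<^sub>v a) = lam \<cdot>\<^sub>v (?V *\<^sub>v a)" if "a \<in> carrier_vec 1" for a
    unfolding Va[OF that] mult_mat_vec[OF A b(1)] Ab by (auto simp: mult.commute)
  ultimately show ?thesis unfolding eigen_block_def by simp
qed

section \<open>Smith forms\<close>

lemma in_Smith_form_diag_dvd:
  assumes S: "in_Smith_form S" "S \<in> carrier_mat p p" and ij: "i \<le> j" "j < p"
  shows "S $$ (i, i) dvd S $$ (j, j)"
  using ij
proof (induction j)
  case (Suc j)
  show ?case
  proof (cases "i = Suc j")
    case False
    with Suc.prems have "S $$ (i, i) dvd S $$ (j, j)" by (intro Suc.IH) auto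
    also have "S $$ (j, j) dvd S $$ (Suc j, Suc j)"
      using S Suc.prems unfolding in_Smith_form_def by auto
    finally show ?thesis .
  qed simp
qed simp

lemma in_Smith_form_off_diag: "in_Smith_form S \<Longrightarrow> S \<in> carrier_mat p p \<Longrightarrow>
    i < p \<Longrightarrow> j < p \<Longrightarrow> i \<noteq> j \<Longrightarrow> S $$ (i, j) = 0"
  unfolding in_Smith_form_def by auto

lemma in_Smith_form_zero_tail:
  assumes S: "in_Smith_form S" "S \<in> carrier_mat p p" and zero: "S $$ (j0, j0) = 0"
    and ij: "i < p" "j0 \<le> j" "j < p"
  shows "S $$ (i, j) = 0"
proof (cases "i = j")
  case True
  with in_Smith_form_diag_dvd[OF S] ij zero show ?thesis by fastforce
qed (use in_Smith_form_off_diag[OF S] ij in simp)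

lemma (in comm_ring_hom) in_Smith_form_hom: "in_Smith_form S \<Longrightarrow> in_Smith_form (map_mat hom S)"
  unfolding in_Smith_form_def by (auto intro: hom_dvd)

lemma invertible_mat_inverse:
  assumes P: "P \<in> carrier_mat p p" and "invertible_mat P"
  obtains B where "B \<in> carrier_mat p p" "P * B = 1\<^sub>m p" "B * P = 1\<^sub>m p"
proof -
  obtain B where B: "P * B = 1\<^sub>m p" "B * P = 1\<^sub>m (dim_row B)"
    using assms unfolding invertible_mat_def inverts_mat_def by auto
  have "dim_col B = p" using arg_cong[OF B(1), of dim_col] by simp
  moreover have "dim_row B = p" using arg_cong[OF B(2), of dim_col] P by simp
  ultimately show ?thesis using B that by auto
qed

lemma invertible_mat_imp_inj_mat:
  assumes Q: "Q \<in> carrier_mat p p" and "invertible_mat Q"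
  shows "inj_mat Q"
proof (rule inj_matI[OF Q])
  fix x assume x: "x \<in> carrier_vec p" and "Q *\<^sub>v x = 0\<^sub>v p"
  obtain B where B: "B \<in> carrier_mat p p" "B * Q = 1\<^sub>m p"
    using invertible_mat_inverse assms by metis
  have "x = (B * Q) *\<^sub>v x" using B(2) x by simp
  also have "\<dots> = B *\<^sub>v (Q *\<^sub>v x)" using B(1) Q x by simp
  finally show "x = 0\<^sub>v p" using \<open>Q *\<^sub>v x = 0\<^sub>v p\<close> mult_mat_vec_zero[OF B(1)] by simp
qed

lemma invertible_mat_det_unit:
  fixes P :: "'a::comm_ring_1 mat"
  assumes P: "P \<in> carrier_mat p p" and "invertible_mat P"
  shows "det P dvd 1"
proof -
  obtain B where B: "B \<in> carrier_mat p p" "P * B = 1\<^sub>m p"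
    using invertible_mat_inverse assms by metis
  have "det P * det B = 1" using det_mult[OF P B(1)] B(2) by simp
  thus ?thesis by (metis dvdI)
qed

lemma (in comm_ring_hom) invertible_mat_hom:
  assumes P: "P \<in> carrier_mat p p" and "invertible_mat P"
  shows "invertible_mat (map_mat hom P)"
proof -
  obtain B where B: "B \<in> carrier_mat p p" "P * B = 1\<^sub>m p" "B * P = 1\<^sub>m p"
    using invertible_mat_inverse assms by metis
  have "map_mat hom P * map_mat hom B = 1\<^sub>m p" "map_mat hom B * map_mat hom P = 1\<^sub>m p"
    using mat_hom_mult[OF P B(1)] mat_hom_mult[OF B(1) P] B(2,3) mat_hom_one by metis+
  thus ?thesis unfolding invertible_mat_def inverts_mat_def using P B(1)
    by (intro conjI exI[of _ "map_mat hom B"]) auto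
qed

text \<open>\<open>pencil A\<close> is the characteristic matrix of \<open>-A\<close>.\<close>
definition pencil :: "int mat \<Rightarrow> int poly mat" where
  "pencil A = map_mat (\<lambda>a. [:a:]) A + [:0, 1:] \<cdot>\<^sub>m 1\<^sub>m (dim_row A)"

lemma pencil_carrier: "A \<in> carrier_mat p p \<Longrightarrow> pencil A \<in> carrier_mat p p"
  unfolding pencil_def by auto

lemma pencil_index:
  "A \<in> carrier_mat p p \<Longrightarrow> i < p \<Longrightarrow> j < p \<Longrightarrow>
    pencil A $$ (i, j) = [:A $$ (i, j):] + (if i = j then [:0, 1:] else 0)"
  unfolding pencil_def by simp

definition eval_complex :: "complex \<Rightarrow> int poly \<Rightarrow> complex" where
  "eval_complex z f = poly (of_int_poly f) z"

interpretation eval_complex: comm_ring_hom "eval_complex z" for z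
  by unfold_locales (auto simp: eval_complex_def of_int_poly_hom.hom_add of_int_poly_hom.hom_mult)

lemma eval_complex_const [simp]: "eval_complex z [:a:] = of_int a"
  by (cases "a = 0") (simp_all add: eval_complex_def map_poly_pCons)

lemma eval_complex_linear [simp]: "eval_complex z [:a, 1:] = of_int a + z"
  by (simp add: eval_complex_def map_poly_pCons)

lemma lead_coeff_det_pencil:
  assumes A: "A \<in> carrier_mat p p"
  shows "lead_coeff (det (pencil A)) = 1"
proof -
  have "pencil A = char_poly_matrix (- A)"
    unfolding pencil_def char_poly_matrix_def using A by (intro eq_matI) auto
  with degree_monic_char_poly[of "- A" p] A show ?thesis
    unfolding char_poly_def by simp
qed

lemma lead_coeff_Smith_pencil_unit:
  assumes P: "P \<in> carrier_mat p p" and Q: "Q \<in> carrier_mat p p"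
    and inv: "invertible_mat P" "invertible_mat Q"
    and A: "A \<in> carrier_mat p p"
    and S: "in_Smith_form (P * pencil A * Q)" and j: "j < p"
  shows "is_unit (lead_coeff ((P * pencil A * Q) $$ (j, j)))"
proof -
  define S where "S = P * pencil A * Q"
  have M: "pencil A \<in> carrier_mat p p" using pencil_carrier[OF A] .
  have Sc: "S \<in> carrier_mat p p" unfolding S_def using P M Q by auto
  have "upper_triangular S"
    using S Sc unfolding S_def[symmetric] in_Smith_form_def upper_triangular_def by auto
  hence "det S = prod_list (diag_mat S)" by (rule det_upper_triangular[OF _ Sc])
  moreover have "S $$ (j, j) \<in> set (diag_mat S)" using j Sc unfolding diag_mat_def by auto
  ultimately obtain g where g: "det S = S $$ (j, j) * g"
    by (metis dvdE prod_list_dvd)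
  have "det S = det P * det (pencil A) * det Q" unfolding S_def
    using det_mult[OF mult_carrier_mat[OF P M] Q] det_mult[OF P M] by simp
  then obtain u where u: "is_unit u" "det S = u * det (pencil A)"
    using invertible_mat_det_unit[OF P inv(1)] invertible_mat_det_unit[OF Q inv(2)]
    by (metis is_unit_mult_iff mult.assoc mult.commute)
  have "lead_coeff (S $$ (j, j)) * lead_coeff g = lead_coeff u"
    using g u(2) lead_coeff_det_pencil[OF A] by (metis lead_coeff_mult mult_1_right)
  hence "lead_coeff (S $$ (j, j)) dvd lead_coeff u" by (rule dvdI[OF sym])
  moreover obtain cu where "u = [:cu:]" "cu dvd 1" using u(1) is_unit_poly_iff by blast
  ultimately show ?thesis unfolding S_def[symmetric] by (metis dvd_unit_imp_unit lead_coeff_pCons(2) dvd_0_left)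
qed

lemma kernel_of_zero_columns:
  fixes P M Q :: "'f::field mat"
  assumes P: "P \<in> carrier_mat p p" and M: "M \<in> carrier_mat p p" and Q: "Q \<in> carrier_mat p p"
    and inv: "invertible_mat P" "invertible_mat Q" and j0: "j0 \<le> p"
    and zero: "\<And>i j. i < p \<Longrightarrow> j0 \<le> j \<Longrightarrow> j < p \<Longrightarrow> (P * M * Q) $$ (i, j) = 0"
  obtains V where "V \<in> carrier_mat p (p - j0)" "inj_mat V"
    "\<And>a. a \<in> carrier_vec (p - j0) \<Longrightarrow> M *\<^sub>v (V *\<^sub>v a) = 0\<^sub>v p"
proof -
  define c where "c = p - j0"
  have p: "p = j0 + c" using j0 unfolding c_def by simp
  define V where "V = mat p c (\<lambda>(i, j). Q $$ (i, j0 + j))"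
  have Vc: "V \<in> carrier_mat p c" unfolding V_def by simp
  have Va: "V *\<^sub>v a = Q *\<^sub>v (0\<^sub>v j0 @\<^sub>v a)" if "a \<in> carrier_vec c" for a
    unfolding V_def by (rule mult_mat_vec_zero_append[symmetric]) (use Q p that in auto)
  have x: "0\<^sub>v j0 @\<^sub>v a \<in> carrier_vec p" if "a \<in> carrier_vec c" for a :: "'f vec"
    using that p by simp
  show thesis
  proof (rule that)
    show "V \<in> carrier_mat p (p - j0)" using Vc unfolding c_def .
    show "inj_mat V"
    proof (rule inj_matI[OF Vc])
      fix a :: "'f vec" assume a: "a \<in> carrier_vec c" and "V *\<^sub>v a = 0\<^sub>v p"
      hence pad0: "0\<^sub>v j0 @\<^sub>v a = 0\<^sub>v p"
        using inj_matD[OF invertible_mat_imp_inj_mat[OF Q inv(2)] Q x] Va by simp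
      show "a = 0\<^sub>v c"
      proof (rule eq_vecI)
        fix j assume "j < dim_vec (0\<^sub>v c :: 'f vec)"
        hence j: "j < c" by simp
        have "(0\<^sub>v j0 @\<^sub>v a) $ (j0 + j) = 0" using pad0 j p by simp
        thus "a $ j = 0\<^sub>v c $ j" using j a by simp
      qed (use a in simp)
    qed
    fix a :: "'f vec" assume "a \<in> carrier_vec (p - j0)"
    hence a: "a \<in> carrier_vec c" unfolding c_def .
    have "mat p c (\<lambda>(i, j). (P * M * Q) $$ (i, j0 + j)) = 0\<^sub>m p c"
      using zero p by (intro eq_matI) auto
    moreover have "0\<^sub>m p c *\<^sub>v a = 0\<^sub>v p" by (intro eq_vecI) (use a in \<open>auto simp: scalar_prod_def\<close>)
    ultimately have "(P * M * Q) *\<^sub>v (0\<^sub>v j0 @\<^sub>v a) = 0\<^sub>v p"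
      using mult_mat_vec_zero_append[of "P * M * Q" p j0 c a] P M Q p a by simp
    hence "P *\<^sub>v (M *\<^sub>v (V *\<^sub>v a)) = 0\<^sub>v p"
      using Va[OF a] assoc_mult_mat[OF P M Q] assoc_mult_mat_vec[OF M Q x[OF a]]
        assoc_mult_mat_vec[OF P mult_carrier_mat[OF M Q] x[OF a]] by simp
    thus "M *\<^sub>v (V *\<^sub>v a) = 0\<^sub>v p"
      using inj_matD[OF invertible_mat_imp_inj_mat[OF P inv(1)] P] M Q x[OF a] Vc a by simp
  qed
qed

lemma int_mat_left_inverse:
  fixes A B :: "int mat"
  assumes A: "A \<in> carrier_mat q q" and B: "B \<in> carrier_mat q q" and AB: "A * B = 1\<^sub>m q"
  shows "B * A = 1\<^sub>m q"
proof -
  let ?h = "of_int :: int \<Rightarrow> rat"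
  have "map_mat ?h A * map_mat ?h B = 1\<^sub>m q"
    using of_int_hom.mat_hom_mult[OF A B] AB of_int_hom.mat_hom_one by metis
  hence "map_mat ?h B * map_mat ?h A = 1\<^sub>m q"
    by (rule mat_mult_left_right_inverse[rotated 2]) (use A B in auto)
  hence "map_mat ?h (B * A) = map_mat ?h (1\<^sub>m q)"
    using of_int_hom.mat_hom_mult[OF B A] of_int_hom.mat_hom_one by metis
  thus ?thesis by (rule of_int_hom.mat_hom_inj)
qed

text \<open>Rescaling the columns of \<open>Y\<close> gives a right inverse of the top \<open>q \<times> q\<close> block of \<open>X\<close>.\<close>
lemma identity_block_of_diagonal_product:
  fixes X Y :: "int mat"
  assumes X: "X \<in> carrier_mat p q" and Y: "Y \<in> carrier_mat q p" and qp: "q \<le> p"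
    and off: "\<And>i j. i < p \<Longrightarrow> j < p \<Longrightarrow> i \<noteq> j \<Longrightarrow> (X * Y) $$ (i, j) = 0"
    and unit: "\<And>j. j < q \<Longrightarrow> (X * Y) $$ (j, j) dvd 1"
  obtains R where "R \<in> carrier_mat q q" "invertible_mat R"
    "X * R = mat p q (\<lambda>(i, j). if i = j then 1 else 0)"
proof -
  define R where "R = mat q q (\<lambda>(k, j). Y $$ (k, j) * (X * Y) $$ (j, j))"
  have Rc: "R \<in> carrier_mat q q" unfolding R_def by simp
  have XR_entry: "(X * R) $$ (i, j) = (if i = j then 1 else 0)" if ij: "i < p" "j < q" for i j
  proof -
    have "(X * R) $$ (i, j) = (\<Sum>k\<in>{0..<q}. X $$ (i, k) * Y $$ (k, j)) * (X * Y) $$ (j, j)"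
      using ij X Rc by (simp add: scalar_prod_def R_def sum_distrib_right mult.assoc)
    also have "(\<Sum>k\<in>{0..<q}. X $$ (i, k) * Y $$ (k, j)) = (X * Y) $$ (i, j)"
      using ij X Y qp by (simp add: scalar_prod_def)
    finally have XR_ij: "(X * R) $$ (i, j) = (X * Y) $$ (i, j) * (X * Y) $$ (j, j)" .
    show ?thesis
    proof (cases "i = j")
      case True
      have "\<bar>(X * Y) $$ (j, j)\<bar> = 1" using unit[OF ij(2)] by simp
      then show ?thesis using XR_ij True by (metis abs_mult_self_eq mult_1_right)
    qed (use XR_ij off[OF ij(1)] ij qp in simp)
  qed
  have XR: "X * R = mat p q (\<lambda>(i, j). if i = j then 1 else 0)"
    by (rule eq_matI) (use X Rc XR_entry in auto)
  define X1 where "X1 = mat q q (\<lambda>(i, j). X $$ (i, j))"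
  have X1c: "X1 \<in> carrier_mat q q" unfolding X1_def by simp
  have X1R: "X1 * R = 1\<^sub>m q"
  proof (rule eq_matI)
    fix i j assume "i < dim_row (1\<^sub>m q :: int mat)" "j < dim_col (1\<^sub>m q :: int mat)"
    hence ij: "i < q" "j < q" by auto
    have "(X1 * R) $$ (i, j) = (X * R) $$ (i, j)"
      using ij X X1c Rc qp by (simp add: scalar_prod_def X1_def)
    thus "(X1 * R) $$ (i, j) = 1\<^sub>m q $$ (i, j)" using XR_entry[of i j] ij qp by simp
  qed (use X1c Rc in auto)
  have "invertible_mat R" unfolding invertible_mat_def inverts_mat_def
    using Rc X1c X1R int_mat_left_inverse[OF X1c Rc X1R] by (intro conjI exI[of _ X1]) auto
  with Rc XR that show thesis by blast
qed

lemma poly_eq_lead_coeff_if_roots: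
  fixes f :: "complex poly"
  assumes "\<And>a. poly f a = 0 \<Longrightarrow> x - a = 1"
  shows "poly f x = lead_coeff f"
proof -
  obtain as where f: "f = smult (lead_coeff f) (\<Prod>a\<leftarrow>as. [:- a, 1:])"
    using fundamental_theorem_algebra_factorized[of f] by metis
  have "poly f a = 0" if "a \<in> set as" for a
    using that by (subst f) (induction as, auto)
  hence "\<forall>a \<in> set as. x - a = 1" using assms by blast
  hence "poly (\<Prod>a\<leftarrow>as. [:- a, 1:]) x = 1" by (induction as) auto
  thus ?thesis by (subst f) simp
qed

section \<open>Differential posets\<close>

lemma sum_indicator_bij_betw:
  assumes "bij_betw f {..<(n::nat)} S"
  shows "(\<Sum>k<n. if Q (f k) then 1 else 0::int) = int (card {z\<in>S. Q z})"
proof -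
  have "finite S" using bij_betw_finite[OF assms] by simp
  have "(\<Sum>k<n. if Q (f k) then 1 else 0::int) = (\<Sum>z\<in>S. if Q z then 1 else 0)"
    by (rule sum.reindex_bij_betw[OF assms])
  also have "\<dots> = (\<Sum>z\<in>{z\<in>S. Q z}. 1)" by (rule sum.inter_filter[OF \<open>finite S\<close>, symmetric])
  finally show ?thesis by simp
qed

locale r_differential_poset =
  fixes r :: nat and rk :: "'a::order \<Rightarrow> nat"
  assumes differential: "differential_poset r rk"
begin

abbreviation rank_card :: "nat \<Rightarrow> nat" where "rank_card n \<equiv> card (rank_set rk n)"
abbreviation enum :: "nat \<Rightarrow> nat \<Rightarrow> 'a" where "enum n \<equiv> rank_enum rk n"

lemma r_pos: "0 < r"
  using differential unfolding differential_poset_def by auto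

lemma card_up_covers: "card {y. covers y (x::'a)} = card {y. covers x y} + r"
  using differential unfolding differential_poset_def by simp

lemma card_common_covers:
  "(x::'a) \<noteq> y \<Longrightarrow> card {z. covers z x \<and> covers z y} = card {z. covers x z \<and> covers y z}"
  using differential unfolding differential_poset_def by blast

lemma graded: "graded_poset_min rk"
  using differential unfolding differential_poset_def by auto

lemma covers_rank: "covers y x \<Longrightarrow> rk y = Suc (rk x)"
  using graded unfolding graded_poset_min_def by auto

lemma finite_rank_set: "finite (rank_set rk n)"
  using graded unfolding graded_poset_min_def by auto

lemma finite_interval: "finite {z. (x::'a) \<le> z \<and> z \<le> y}"
  using graded unfolding graded_poset_min_def by blast

definition bottom :: 'a where "bottom = (SOME m. (\<forall>x. m \<le> x) \<and> rk m = 0)"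

lemma bottom_le: "bottom \<le> x" and rk_bottom: "rk bottom = 0"
proof -
  have "\<exists>m. (\<forall>x. m \<le> x) \<and> rk m = 0" using graded unfolding graded_poset_min_def by auto
  from someI_ex[OF this] show "bottom \<le> x" "rk bottom = 0" unfolding bottom_def by auto
qed

lemma rank_zero_eq_bottom:
  assumes "rk x = 0"
  shows "x = bottom"
proof (rule ccontr)
  assume "x \<noteq> bottom"
  hence lt: "bottom < x" using bottom_le by (metis le_neq_trans)
  \<comment> \<open>a maximal element of the interval \<open>[bottom, x)\<close> is covered by \<open>x\<close>\<close>
  define T where "T = {z. bottom \<le> z \<and> z < x}"
  have "finite T"
    by (rule finite_subset[OF _ finite_interval[of bottom x]]) (auto simp: T_def)
  moreover have "bottom \<in> T" using lt unfolding T_def by blast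
  ultimately obtain z where z: "z \<in> T" and zmax: "\<And>b. b \<in> T \<Longrightarrow> z \<le> b \<Longrightarrow> z = b"
    using finite_has_maximal by (metis empty_iff)
  have "\<not> (z < w \<and> w < x)" for w
    using zmax[of w] bottom_le[of w] by (auto simp: T_def less_le)
  with z have "covers x z" unfolding covers_def T_def by blast
  from covers_rank[OF this] assms show False by simp
qed

lemma rank_set_0: "rank_set rk 0 = {bottom}"
  unfolding rank_set_def using rank_zero_eq_bottom rk_bottom by blast

lemma rank_card_0: "rank_card 0 = 1"
  by (simp add: rank_set_0)

lemma not_covers_bottom: "\<not> covers bottom w"
  unfolding covers_def using bottom_le by (metis leD)

lemma enum_bij: "bij_betw (enum n) {..<rank_card n} (rank_set rk n)"
proof -
  have "\<exists>f. bij_betw f {..<rank_card n} (rank_set rk n)"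
    using ex_bij_betw_nat_finite[OF finite_rank_set] by (simp add: atLeast0LessThan)
  from someI_ex[OF this] show ?thesis unfolding rank_enum_def .
qed

lemma enum_rank: "i < rank_card n \<Longrightarrow> rk (enum n i) = n"
  using enum_bij[of n] unfolding bij_betw_def rank_set_def by auto

lemma enum_inj: "i < rank_card n \<Longrightarrow> j < rank_card n \<Longrightarrow> enum n i = enum n j \<Longrightarrow> i = j"
  using enum_bij[of n] unfolding bij_betw_def inj_on_def by auto

lemma U_carrier: "U_mat rk n \<in> carrier_mat (rank_card (Suc n)) (rank_card n)"
  by (simp add: U_mat_def)

lemma D_carrier: "D_mat rk n \<in> carrier_mat (rank_card n) (rank_card (Suc n))"
  by (simp add: D_mat_def)

lemma DU_carrier: "DU_mat rk n \<in> carrier_mat (rank_card n) (rank_card n)"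
  unfolding DU_mat_def using D_carrier U_carrier by (rule mult_carrier_mat)

lemma UD_carrier: "U_mat rk n * D_mat rk n \<in> carrier_mat (rank_card (Suc n)) (rank_card (Suc n))"
  using U_carrier D_carrier by (rule mult_carrier_mat)

lemma DU_entry:
  assumes "i < rank_card n" "j < rank_card n"
  shows "DU_mat rk n $$ (i, j) = int (card {z. covers z (enum n i) \<and> covers z (enum n j)})"
proof -
  have "DU_mat rk n $$ (i, j) = (\<Sum>k<rank_card (Suc n).
      if covers (enum (Suc n) k) (enum n i) \<and> covers (enum (Suc n) k) (enum n j) then 1 else 0)"
    using assms by (auto simp: DU_mat_def D_mat_def U_mat_def scalar_prod_def atLeast0LessThan
        intro!: sum.cong)
  also have "\<dots> = int (card {z \<in> rank_set rk (Suc n). covers z (enum n i) \<and> covers z (enum n j)})"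
    by (rule sum_indicator_bij_betw[OF enum_bij])
  also have "{z \<in> rank_set rk (Suc n). covers z (enum n i) \<and> covers z (enum n j)}
      = {z. covers z (enum n i) \<and> covers z (enum n j)}"
    using covers_rank enum_rank[OF assms(1)] by (auto simp: rank_set_def)
  finally show ?thesis .
qed

lemma UD_entry:
  assumes "i < rank_card (Suc n)" "j < rank_card (Suc n)"
  shows "(U_mat rk n * D_mat rk n) $$ (i, j)
    = int (card {w. covers (enum (Suc n) i) w \<and> covers (enum (Suc n) j) w})"
proof -
  have "(U_mat rk n * D_mat rk n) $$ (i, j) = (\<Sum>k<rank_card n.
      if covers (enum (Suc n) i) (enum n k) \<and> covers (enum (Suc n) j) (enum n k) then 1 else 0)"
    using assms by (auto simp: D_mat_def U_mat_def scalar_prod_def atLeast0LessThan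
        intro!: sum.cong)
  also have "\<dots> = int (card {w \<in> rank_set rk n. covers (enum (Suc n) i) w \<and> covers (enum (Suc n) j) w})"
    by (rule sum_indicator_bij_betw[OF enum_bij])
  also have "{w \<in> rank_set rk n. covers (enum (Suc n) i) w \<and> covers (enum (Suc n) j) w}
      = {w. covers (enum (Suc n) i) w \<and> covers (enum (Suc n) j) w}"
    using covers_rank enum_rank[OF assms(1)] by (auto simp: rank_set_def)
  finally show ?thesis .
qed

lemma DU_0: "DU_mat rk 0 = of_nat r \<cdot>\<^sub>m 1\<^sub>m (rank_card 0)"
proof (rule eq_matI)
  fix i j assume "i < dim_row (of_nat r \<cdot>\<^sub>m 1\<^sub>m (rank_card 0) :: int mat)"
    "j < dim_col (of_nat r \<cdot>\<^sub>m 1\<^sub>m (rank_card 0) :: int mat)"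
  hence "i = 0" "j = 0" using rank_card_0 by auto
  moreover have "enum 0 0 = bottom" using rank_zero_eq_bottom[OF enum_rank[of 0 0]] rank_card_0 by simp
  ultimately show "DU_mat rk 0 $$ (i, j) = (of_nat r \<cdot>\<^sub>m 1\<^sub>m (rank_card 0)) $$ (i, j)"
    using DU_entry[of 0 0 0] rank_card_0 card_up_covers[of bottom] not_covers_bottom by simp
qed (use DU_carrier[of 0] in auto)

text \<open>Axioms (D1) and (D2) in matrix form.\<close>
lemma DU_Suc: "DU_mat rk (Suc n) = U_mat rk n * D_mat rk n + of_nat r \<cdot>\<^sub>m 1\<^sub>m (rank_card (Suc n))"
proof (rule eq_matI)
  fix i j assume "i < dim_row (U_mat rk n * D_mat rk n + of_nat r \<cdot>\<^sub>m 1\<^sub>m (rank_card (Suc n)))"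
     "j < dim_col (U_mat rk n * D_mat rk n + of_nat r \<cdot>\<^sub>m 1\<^sub>m (rank_card (Suc n)))"
  hence ij: "i < rank_card (Suc n)" "j < rank_card (Suc n)" by (auto simp: U_mat_def)
  show "DU_mat rk (Suc n) $$ (i, j) = (U_mat rk n * D_mat rk n + of_nat r \<cdot>\<^sub>m 1\<^sub>m (rank_card (Suc n))) $$ (i, j)"
  proof (cases "i = j")
    case True
    then show ?thesis
      using ij DU_entry[OF ij] UD_entry[OF ij] UD_carrier card_up_covers[of "enum (Suc n) j"] by simp
  next
    case False
    hence "enum (Suc n) i \<noteq> enum (Suc n) j" using enum_inj ij by blast
    then show ?thesis
      using ij DU_entry[OF ij] UD_entry[OF ij] UD_carrier card_common_covers False by simp
  qed
qed (use DU_carrier[of "Suc n"] in \<open>auto simp: U_mat_def\<close>)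

lemma rank_card_pos: "0 < rank_card n"
proof (induction n)
  case 0
  show ?case using rank_card_0 by simp
next
  case (Suc n)
  then obtain x where x: "x \<in> rank_set rk n" by (metis card.empty less_irrefl ex_in_conv)
  have "card {y. covers y x} \<noteq> 0" unfolding card_up_covers using r_pos by linarith
  then obtain y where y: "covers y x" by (metis Collect_empty_eq card.empty)
  have "y \<in> rank_set rk (Suc n)" using covers_rank[OF y] x unfolding rank_set_def by simp
  thus ?case using finite_rank_set[of "Suc n"] by (auto simp: card_gt_0_iff)
qed

lemma delta_p_of_nat:
  "delta_p rk (int m) = int (rank_card m) - (if m = 0 then 0 else int (rank_card (m - 1)))"
proof (cases "m = 0")
  case False
  have size: "rank_size rk (int x) = int (rank_card x)" for x by (simp add: rank_size_def)
  have "int m - 1 = int (m - 1)" using False by simp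
  thus ?thesis using False unfolding delta_p_def \<open>int m - 1 = int (m - 1)\<close> size by simp
qed (simp add: delta_p_def rank_size_def)

section \<open>The spectrum of \<open>DU\<close>\<close>

definition Uc :: "nat \<Rightarrow> complex mat" where "Uc n = map_mat of_int (U_mat rk n)"
definition Dc :: "nat \<Rightarrow> complex mat" where "Dc n = map_mat of_int (D_mat rk n)"
definition DUc :: "nat \<Rightarrow> complex mat" where "DUc n = map_mat of_int (DU_mat rk n)"

lemma Uc_carrier: "Uc n \<in> carrier_mat (rank_card (Suc n)) (rank_card n)"
  using U_carrier[of n] by (simp add: Uc_def)

lemma Dc_carrier: "Dc n \<in> carrier_mat (rank_card n) (rank_card (Suc n))"
  using D_carrier[of n] by (simp add: Dc_def)

lemma DUc_carrier: "DUc n \<in> carrier_mat (rank_card n) (rank_card n)"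
  using DU_carrier[of n] by (simp add: DUc_def)

lemma DUc_mult_vec: "b \<in> carrier_vec (rank_card n) \<Longrightarrow> DUc n *\<^sub>v b = Dc n *\<^sub>v (Uc n *\<^sub>v b)"
  unfolding DUc_def Dc_def Uc_def DU_mat_def of_int_hom.mat_hom_mult[OF D_carrier U_carrier]
  using D_carrier U_carrier by (metis assoc_mult_mat_vec map_carrier_mat)

lemma DUc_0_mult_vec:
  assumes w: "w \<in> carrier_vec (rank_card 0)"
  shows "DUc 0 *\<^sub>v w = of_nat r \<cdot>\<^sub>v w"
proof -
  have "DUc 0 = of_nat r \<cdot>\<^sub>m 1\<^sub>m (rank_card 0)" unfolding DUc_def DU_0 by (rule eq_matI) auto
  thus ?thesis using smult_one_mat_mult_vec[OF w] by simp
qed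

lemma DUc_Suc_mult_vec:
  assumes w: "w \<in> carrier_vec (rank_card (Suc n))"
  shows "DUc (Suc n) *\<^sub>v w = Uc n *\<^sub>v (Dc n *\<^sub>v w) + of_nat r \<cdot>\<^sub>v w"
proof -
  have "DUc (Suc n) = Uc n * Dc n + of_nat r \<cdot>\<^sub>m 1\<^sub>m (rank_card (Suc n))"
    unfolding DUc_def DU_Suc Uc_def Dc_def
    by (rule eq_matI) (use carrier_matD[OF UD_carrier[of n]] in
        \<open>auto simp: of_int_hom.mat_hom_mult[OF U_carrier D_carrier, symmetric]\<close>)
  hence "DUc (Suc n) *\<^sub>v w = (Uc n * Dc n) *\<^sub>v w + (of_nat r \<cdot>\<^sub>m 1\<^sub>m (rank_card (Suc n))) *\<^sub>v w"
    using add_mult_distrib_mat_vec[OF mult_carrier_mat[OF Uc_carrier Dc_carrier] _ w] by simp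
  moreover have "(of_nat r \<cdot>\<^sub>m 1\<^sub>m (rank_card (Suc n))) *\<^sub>v w = of_nat r \<cdot>\<^sub>v w"
    by (rule smult_one_mat_mult_vec[OF w])
  ultimately show ?thesis using assoc_mult_mat_vec[OF Uc_carrier Dc_carrier w] by simp
qed

lemma inj_mat_DUc_if_eigenvalues_nonzero:
  assumes "\<And>lam c V. V \<in> carrier_mat (rank_card N) c \<Longrightarrow> eigen_block (DUc N) lam V \<Longrightarrow> lam \<noteq> 0"
  shows "inj_mat (DUc N)"
proof (rule inj_matI[OF DUc_carrier])
  fix b :: "complex vec"
  assume b: "b \<in> carrier_vec (rank_card N)" and "DUc N *\<^sub>v b = 0\<^sub>v (rank_card N)"
  hence "DUc N *\<^sub>v b = 0 \<cdot>\<^sub>v b" using zero_smult_vec by metis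
  with b eigen_block_single_column[OF DUc_carrier b] assms show "b = 0\<^sub>v (rank_card N)"
    by (metis carrier_matI dim_col_mat(1) dim_row_mat(1))
qed

lemma eigen_block_DUc_Suc_r_dim_le:
  assumes inj: "inj_mat (DUc n)" and V: "V \<in> carrier_mat (rank_card (Suc n)) c"
    and eig: "eigen_block (DUc (Suc n)) (of_nat r) V"
  shows "c + rank_card n \<le> rank_card (Suc n)"
proof (rule independent_blocks_dim_le[OF V Uc_carrier])
  have D_zero: "Dc n *\<^sub>v (V *\<^sub>v a) = 0\<^sub>v (rank_card n)" if a: "a \<in> carrier_vec c" for a
  proof (rule inj_matD[OF inj DUc_carrier])
    have w: "V *\<^sub>v a \<in> carrier_vec (rank_card (Suc n))" using V a by simp
    have "Uc n *\<^sub>v (Dc n *\<^sub>v (V *\<^sub>v a)) + of_nat r \<cdot>\<^sub>v (V *\<^sub>v a) = of_nat r \<cdot>\<^sub>v (V *\<^sub>v a)"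
      using eig a V DUc_Suc_mult_vec[OF w] unfolding eigen_block_def by auto
    hence "Uc n *\<^sub>v (Dc n *\<^sub>v (V *\<^sub>v a)) = (of_nat r - of_nat r) \<cdot>\<^sub>v (V *\<^sub>v a)"
      by (rule add_smult_vec_eq_imp[OF mult_mat_vec_carrier[OF Uc_carrier
            mult_mat_vec_carrier[OF Dc_carrier w]] w])
    hence "Uc n *\<^sub>v (Dc n *\<^sub>v (V *\<^sub>v a)) = 0\<^sub>v (rank_card (Suc n))"
      using zero_smult_vec[OF w] by simp
    thus "DUc n *\<^sub>v (Dc n *\<^sub>v (V *\<^sub>v a)) = 0\<^sub>v (rank_card n)"
      using DUc_mult_vec[OF mult_mat_vec_carrier[OF Dc_carrier w]] mult_mat_vec_zero[OF Dc_carrier]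
      by simp
  qed (use mult_mat_vec_carrier[OF Dc_carrier mult_mat_vec_carrier[OF V a]] in simp)
  fix a b
  assume a: "a \<in> carrier_vec c" and b: "b \<in> carrier_vec (rank_card n)"
    and sum0: "V *\<^sub>v a + Uc n *\<^sub>v b = 0\<^sub>v (rank_card (Suc n))"
  have Ub: "Uc n *\<^sub>v b \<in> carrier_vec (rank_card (Suc n))" using mult_mat_vec_carrier[OF Uc_carrier b] .
  have "DUc n *\<^sub>v b = Dc n *\<^sub>v (V *\<^sub>v a) + Dc n *\<^sub>v (Uc n *\<^sub>v b)"
    using D_zero[OF a] DUc_mult_vec[OF b] mult_mat_vec_carrier[OF Dc_carrier Ub] by simp
  also have "\<dots> = Dc n *\<^sub>v (V *\<^sub>v a + Uc n *\<^sub>v b)"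
    using mult_add_distrib_mat_vec[OF Dc_carrier _ Ub] V a by simp
  also have "\<dots> = 0\<^sub>v (rank_card n)" unfolding sum0 by (rule mult_mat_vec_zero[OF Dc_carrier])
  finally have b0: "b = 0\<^sub>v (rank_card n)" by (rule inj_matD[OF inj DUc_carrier b])
  hence "V *\<^sub>v a = 0\<^sub>v (rank_card (Suc n))"
    using sum0 V a mult_mat_vec_zero[OF Uc_carrier] by simp
  with b0 show "a = 0\<^sub>v c \<and> b = 0\<^sub>v (rank_card n)"
    using eig V a unfolding eigen_block_def by (auto dest: inj_matD)
qed

lemma eigen_block_Dc_mult:
  assumes V: "V \<in> carrier_mat (rank_card (Suc n)) c"
    and eig: "eigen_block (DUc (Suc n)) lam V" and lam: "lam \<noteq> of_nat r"
  shows "eigen_block (DUc n) (lam - of_nat r) (Dc n * V)"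
proof -
  have DV: "Dc n * V \<in> carrier_mat (rank_card n) c" using mult_carrier_mat[OF Dc_carrier V] .
  have DVa: "(Dc n * V) *\<^sub>v a = Dc n *\<^sub>v (V *\<^sub>v a)" if "a \<in> carrier_vec c" for a
    using assoc_mult_mat_vec[OF Dc_carrier V that] .
  have UDV: "Uc n *\<^sub>v (Dc n *\<^sub>v (V *\<^sub>v a)) = (lam - of_nat r) \<cdot>\<^sub>v (V *\<^sub>v a)"
    if a: "a \<in> carrier_vec c" for a
  proof -
    have w: "V *\<^sub>v a \<in> carrier_vec (rank_card (Suc n))" using V a by simp
    have "Uc n *\<^sub>v (Dc n *\<^sub>v (V *\<^sub>v a)) + of_nat r \<cdot>\<^sub>v (V *\<^sub>v a) = lam \<cdot>\<^sub>v (V *\<^sub>v a)"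
      using DUc_Suc_mult_vec[OF w] eig a V unfolding eigen_block_def by auto
    thus ?thesis
      by (rule add_smult_vec_eq_imp[OF mult_mat_vec_carrier[OF Uc_carrier
            mult_mat_vec_carrier[OF Dc_carrier w]] w])
  qed
  have "inj_mat (Dc n * V)"
  proof (rule inj_matI[OF DV])
    fix a :: "complex vec" assume a: "a \<in> carrier_vec c" and "(Dc n * V) *\<^sub>v a = 0\<^sub>v (rank_card n)"
    hence "(lam - of_nat r) \<cdot>\<^sub>v (V *\<^sub>v a) = 0 \<cdot>\<^sub>v (V *\<^sub>v a)"
      using UDV[OF a] DVa[OF a] mult_mat_vec_zero[OF Uc_carrier]
        zero_smult_vec[OF mult_mat_vec_carrier[OF V a]] by simp
    hence "V *\<^sub>v a = 0\<^sub>v (rank_card (Suc n))"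
      using smult_vec_cancel[of _ "V *\<^sub>v a"] lam V a by fastforce
    thus "a = 0\<^sub>v c" using eig V a unfolding eigen_block_def by (auto dest: inj_matD)
  qed
  moreover have "DUc n *\<^sub>v ((Dc n * V) *\<^sub>v a) = (lam - of_nat r) \<cdot>\<^sub>v ((Dc n * V) *\<^sub>v a)"
    if a: "a \<in> carrier_vec c" for a
    using DUc_mult_vec[OF mult_mat_vec_carrier[OF Dc_carrier mult_mat_vec_carrier[OF V a]]]
      UDV[OF a] DVa[OF a] mult_mat_vec[OF Dc_carrier mult_mat_vec_carrier[OF V a]] by simp
  ultimately show ?thesis using eig DV unfolding eigen_block_def by auto
qed

text \<open>The map \<open>D\<close> embeds the \<open>r(k+1)\<close>-eigenspace of \<open>DU\<^sub>N\<close> into the \<open>r k\<close>-eigenspace of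
  \<open>DU\<^sub>N\<^sub>-\<^sub>1\<close>; for \<open>k = 0\<close> the eigenspace lies in \<open>ker D\<close>, which meets the image of the injective
  map \<open>U\<^sub>N\<^sub>-\<^sub>1\<close> trivially.\<close>
lemma eigen_block_DUc_bound:
  assumes "V \<in> carrier_mat (rank_card N) c" "eigen_block (DUc N) lam V"
  shows "\<exists>k\<le>N. lam = of_nat (r * Suc k) \<and> int c \<le> delta_p rk (int (N - k))"
  using assms
proof (induction N arbitrary: lam c V)
  case 0
  hence "0 < c" unfolding eigen_block_def by auto
  define a :: "complex vec" where "a = unit_vec c 0"
  have a: "a \<in> carrier_vec c" "a \<noteq> 0\<^sub>v c"
    using \<open>0 < c\<close> arg_cong[of a "0\<^sub>v c" "\<lambda>v. v $ 0"] by (auto simp: a_def)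
  have w: "V *\<^sub>v a \<in> carrier_vec (rank_card 0)" "V *\<^sub>v a \<noteq> 0\<^sub>v (rank_card 0)"
    using 0 a unfolding eigen_block_def by (auto dest: inj_matD)
  have "of_nat r \<cdot>\<^sub>v (V *\<^sub>v a) = lam \<cdot>\<^sub>v (V *\<^sub>v a)"
    using 0 a DUc_0_mult_vec[OF w(1)] unfolding eigen_block_def by auto
  hence "lam = of_nat r" using smult_vec_cancel w by metis
  moreover have "c \<le> rank_card 0" by (rule eigen_block_dim_le[OF 0])
  ultimately show ?case using delta_p_of_nat[of 0] by simp
next
  case (Suc n)
  have inj: "inj_mat (DUc n)"
  proof (rule inj_mat_DUc_if_eigenvalues_nonzero)
    fix lam c V assume "V \<in> carrier_mat (rank_card n) c" "eigen_block (DUc n) lam V"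
    with Suc.IH obtain k where "lam = of_nat (r * Suc k)" by blast
    moreover have "r * Suc k \<noteq> 0" using r_pos by simp
    ultimately show "lam \<noteq> 0" by (metis of_nat_eq_0_iff)
  qed
  show ?case
  proof (cases "lam = of_nat r")
    case True
    with eigen_block_DUc_Suc_r_dim_le[OF inj] Suc.prems
    have "c + rank_card n \<le> rank_card (Suc n)" by blast
    with True show ?thesis by (intro exI[of _ 0]) (use delta_p_of_nat[of "Suc n"] in simp)
  next
    case False
    from Suc.IH[OF _ eigen_block_Dc_mult[OF Suc.prems False]] Dc_carrier Suc.prems(1)
    obtain k where "k \<le> n" "lam - of_nat r = of_nat (r * Suc k)" "int c \<le> delta_p rk (int (n - k))"
      by (meson mult_carrier_mat)
    thus ?thesis by (intro exI[of _ "Suc k"]) (auto simp: algebra_simps)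
  qed
qed

lemma inj_mat_DUc: "inj_mat (DUc N)"
proof (rule inj_mat_DUc_if_eigenvalues_nonzero)
  fix lam c V assume "V \<in> carrier_mat (rank_card N) c" "eigen_block (DUc N) lam V"
  with eigen_block_DUc_bound obtain k where "lam = of_nat (r * Suc k)" by blast
  moreover have "r * Suc k \<noteq> 0" using r_pos by simp
  ultimately show "lam \<noteq> 0" by (metis of_nat_eq_0_iff)
qed

lemma inj_mat_Uc: "inj_mat (Uc n)"
proof (rule inj_matI[OF Uc_carrier])
  fix b assume b: "b \<in> carrier_vec (rank_card n)" and "Uc n *\<^sub>v b = 0\<^sub>v (rank_card (Suc n))"
  hence "DUc n *\<^sub>v b = 0\<^sub>v (rank_card n)"
    using DUc_mult_vec mult_mat_vec_zero[OF Dc_carrier] by simp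
  thus "b = 0\<^sub>v (rank_card n)" by (rule inj_matD[OF inj_mat_DUc DUc_carrier b])
qed

lemma rank_card_mono: "rank_card n \<le> rank_card (Suc n)"
  by (rule inj_mat_dim_le[OF Uc_carrier inj_mat_Uc])

section \<open>The pencil \<open>DU + tI\<close>\<close>

lemma pencil_DU: "pencil (DU_mat rk n) = map_mat (\<lambda>a. [:a:]) (DU_mat rk n) + [:0, 1:] \<cdot>\<^sub>m 1\<^sub>m (rank_card n)"
  unfolding pencil_def using carrier_matD(1)[OF DU_carrier] by simp

lemma eval_complex_pencil_DU:
  "map_mat (eval_complex z) (pencil (DU_mat rk N)) = DUc N + z \<cdot>\<^sub>m 1\<^sub>m (rank_card N)"
  by (rule eq_matI) (use DU_carrier[of N] pencil_carrier[OF DU_carrier[of N]] in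
      \<open>auto simp: pencil_index DUc_def\<close>)

lemma eigen_block_of_eval_pencil_kernel:
  assumes V: "V \<in> carrier_mat (rank_card N) c" "inj_mat V" "0 < c"
    and ker: "\<And>a. a \<in> carrier_vec c \<Longrightarrow>
      map_mat (eval_complex z) (pencil (DU_mat rk N)) *\<^sub>v (V *\<^sub>v a) = 0\<^sub>v (rank_card N)"
  shows "eigen_block (DUc N) (- z) V"
  unfolding eigen_block_def
proof (intro conjI ballI)
  fix a :: "complex vec" assume "a \<in> carrier_vec (dim_col V)"
  hence a: "a \<in> carrier_vec c" using V(1) by simp
  hence w: "V *\<^sub>v a \<in> carrier_vec (rank_card N)" using V(1) by simp
  have "0\<^sub>v (rank_card N) = DUc N *\<^sub>v (V *\<^sub>v a) + (z \<cdot>\<^sub>m 1\<^sub>m (rank_card N)) *\<^sub>v (V *\<^sub>v a)"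
    using ker[OF a] add_mult_distrib_mat_vec[OF DUc_carrier _ w]
    unfolding eval_complex_pencil_DU by simp
  hence "DUc N *\<^sub>v (V *\<^sub>v a) + z \<cdot>\<^sub>v (V *\<^sub>v a) = 0 \<cdot>\<^sub>v (V *\<^sub>v a)"
    using smult_one_mat_mult_vec[OF w] zero_smult_vec[OF w] by simp
  hence "DUc N *\<^sub>v (V *\<^sub>v a) = (0 - z) \<cdot>\<^sub>v (V *\<^sub>v a)"
    by (rule add_smult_vec_eq_imp[OF mult_mat_vec_carrier[OF DUc_carrier w] w])
  thus "DUc N *\<^sub>v (V *\<^sub>v a) = (- z) \<cdot>\<^sub>v (V *\<^sub>v a)" by simp
qed (use V in auto)

lemma eval_pencil_DU_Suc_minus_r:
  "map_mat (\<lambda>f. poly f (- int r)) (pencil (DU_mat rk (Suc n))) = U_mat rk n * D_mat rk n"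
proof (rule eq_matI)
  fix i j assume "i < dim_row (U_mat rk n * D_mat rk n)" "j < dim_col (U_mat rk n * D_mat rk n)"
  hence ij: "i < rank_card (Suc n)" "j < rank_card (Suc n)" using UD_carrier[of n] by auto
  have "DU_mat rk (Suc n) $$ (i, j) = (U_mat rk n * D_mat rk n) $$ (i, j) + (if i = j then int r else 0)"
    using ij UD_carrier[of n] by (simp add: DU_Suc)
  then show "map_mat (\<lambda>f. poly f (- int r)) (pencil (DU_mat rk (Suc n))) $$ (i, j)
      = (U_mat rk n * D_mat rk n) $$ (i, j)"
    using ij pencil_carrier[OF DU_carrier[of "Suc n"]] pencil_index[OF DU_carrier, of i "Suc n" j]
    by (cases "i = j") simp_all
qed (use UD_carrier[of n] pencil_carrier[OF DU_carrier[of "Suc n"]] in auto)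

lemma eval_minus_r_Smith_decomposition:
  assumes P: "P \<in> carrier_mat (rank_card (Suc n)) (rank_card (Suc n))"
    and Q: "Q \<in> carrier_mat (rank_card (Suc n)) (rank_card (Suc n))"
  shows "map_mat (\<lambda>f. poly f (- int r)) P * U_mat rk n * (D_mat rk n * map_mat (\<lambda>f. poly f (- int r)) Q)
    = map_mat (\<lambda>f. poly f (- int r)) (P * pencil (DU_mat rk (Suc n)) * Q)"
proof -
  define g where "g = (\<lambda>f::int poly. poly f (- int r))"
  interpret eval_minus_r: comm_ring_hom g unfolding g_def by unfold_locales auto
  define P' where "P' = map_mat g P"
  define Q' where "Q' = map_mat g Q"
  have P': "P' \<in> carrier_mat (rank_card (Suc n)) (rank_card (Suc n))" using P unfolding P'_def by simp
  have Q': "Q' \<in> carrier_mat (rank_card (Suc n)) (rank_card (Suc n))" using Q unfolding Q'_def by simp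
  have M: "pencil (DU_mat rk (Suc n)) \<in> carrier_mat (rank_card (Suc n)) (rank_card (Suc n))"
    by (rule pencil_carrier[OF DU_carrier])
  have "P' * U_mat rk n * (D_mat rk n * Q') = P' * (U_mat rk n * (D_mat rk n * Q'))"
    by (rule assoc_mult_mat[OF P' U_carrier mult_carrier_mat[OF D_carrier Q']])
  also have "U_mat rk n * (D_mat rk n * Q') = U_mat rk n * D_mat rk n * Q'"
    by (rule assoc_mult_mat[OF U_carrier D_carrier Q', symmetric])
  also have "P' * \<dots> = P' * (U_mat rk n * D_mat rk n) * Q'"
    by (rule assoc_mult_mat[OF P' UD_carrier Q', symmetric])
  also have "\<dots> = map_mat g (P * pencil (DU_mat rk (Suc n)) * Q)"
    using eval_minus_r.mat_hom_mult[OF mult_carrier_mat[OF P M] Q] eval_minus_r.mat_hom_mult[OF P M]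
      eval_pencil_DU_Suc_minus_r[of n, folded g_def] unfolding P'_def Q'_def by simp
  finally show ?thesis unfolding P'_def Q'_def g_def .
qed

end

locale growth_differential_poset = r_differential_poset +
  assumes growth: "\<forall>n::int. \<forall>j::int. 1 \<le> n \<and> 1 \<le> j \<and> j \<le> n \<longrightarrow>
    delta_p rk n \<ge> delta_p rk (n - j - (if r = 1 then 1 else 0))"
begin

lemma delta_p_increase_imp:
  assumes k: "k \<le> Suc n" and incr: "delta_p rk (int (Suc n)) < delta_p rk (int (Suc n - k))"
  shows "r = 1 \<and> k = 1"
proof -
  have "k \<noteq> 0" using incr by (intro notI) simp
  have "k = 1 \<and> r = 1"
  proof (rule ccontr)
    assume "\<not> (k = 1 \<and> r = 1)"
    \<comment> \<open>the step \<open>j\<close> with \<open>n + 1 - j - \<delta>\<^sub>r\<^sub>,\<^sub>1 = n + 1 - k\<close> is admissible\<close>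
    define j where "j = int k - (if r = 1 then 1 else 0)"
    have "1 \<le> j \<and> j \<le> int (Suc n)" using \<open>k \<noteq> 0\<close> \<open>\<not> (k = 1 \<and> r = 1)\<close> k by (auto simp: j_def)
    hence "delta_p rk (int (Suc n)) \<ge> delta_p rk (int (Suc n) - j - (if r = 1 then 1 else 0))"
      using growth by auto
    moreover have "int (Suc n) - j - (if r = 1 then 1 else 0) = int (Suc n - k)"
      using k by (simp add: j_def of_nat_diff)
    ultimately show False using incr by simp
  qed
  thus ?thesis by simp
qed

text \<open>A root \<open>z\<close> makes the last \<open>p\<^sub>n\<^sub>+\<^sub>1 - p\<^sub>n + 1\<close> invariant factors vanish at \<open>z\<close>, producing an
  eigenspace of \<open>DU\<^sub>n\<^sub>+\<^sub>1\<close> for \<open>-z\<close> of dimension \<open>\<Delta>p\<^sub>n\<^sub>+\<^sub>1 + 1\<close>, which the growth condition only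
  allows for \<open>r = 1\<close> and \<open>-z = 2r\<close>.\<close>
lemma Smith_pencil_root:
  assumes P: "P \<in> carrier_mat (rank_card (Suc n)) (rank_card (Suc n))"
    and Q: "Q \<in> carrier_mat (rank_card (Suc n)) (rank_card (Suc n))"
    and inv: "invertible_mat P" "invertible_mat Q"
    and S: "in_Smith_form (P * pencil (DU_mat rk (Suc n)) * Q)"
    and root: "eval_complex z ((P * pencil (DU_mat rk (Suc n)) * Q) $$ (rank_card n - 1, rank_card n - 1)) = 0"
  shows "r = 1 \<and> z = -2"
proof -
  define p where "p = rank_card (Suc n)"
  define j0 where "j0 = rank_card n - 1"
  define M where "M = pencil (DU_mat rk (Suc n))"
  define h where "h = eval_complex z"
  have Mc: "M \<in> carrier_mat p p" unfolding M_def p_def by (rule pencil_carrier[OF DU_carrier])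
  have Pp: "P \<in> carrier_mat p p" and Qp: "Q \<in> carrier_mat p p" using P Q unfolding p_def .
  have S0: "P * M * Q \<in> carrier_mat p p" using Pp Mc Qp by auto
  hence Sc: "map_mat h (P * M * Q) \<in> carrier_mat p p" by simp
  have j0: "j0 < p" "p - j0 = Suc (rank_card (Suc n) - rank_card n)"
    using rank_card_pos[of n] rank_card_mono[of n] unfolding j0_def p_def by auto
  have "map_mat h (P * M * Q) = map_mat h P * map_mat h M * map_mat h Q"
    using eval_complex.mat_hom_mult[OF mult_carrier_mat[OF Pp Mc] Qp]
      eval_complex.mat_hom_mult[OF Pp Mc] unfolding h_def by simp
  moreover have "map_mat h (P * M * Q) $$ (i, j) = 0" if "i < p" "j0 \<le> j" "j < p" for i j
  proof (rule in_Smith_form_zero_tail[OF _ Sc _ that])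
    show "in_Smith_form (map_mat h (P * M * Q))"
      unfolding h_def M_def by (rule eval_complex.in_Smith_form_hom[OF S])
    show "map_mat h (P * M * Q) $$ (j0, j0) = 0"
      using root j0(1) carrier_matD[OF S0] unfolding h_def M_def j0_def by simp
  qed
  ultimately obtain V where V: "V \<in> carrier_mat p (p - j0)" "inj_mat V"
    and MV: "\<And>a. a \<in> carrier_vec (p - j0) \<Longrightarrow> map_mat h M *\<^sub>v (V *\<^sub>v a) = 0\<^sub>v p"
    using kernel_of_zero_columns[of "map_mat h P" p "map_mat h M" "map_mat h Q" j0]
      Pp Mc Qp inv eval_complex.invertible_mat_hom j0(1) unfolding h_def by auto
  have "eigen_block (DUc (Suc n)) (- z) V"
    using eigen_block_of_eval_pencil_kernel V MV j0 unfolding p_def h_def M_def by simp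
  then obtain k where k: "k \<le> Suc n" "- z = of_nat (r * Suc k)"
    and dim: "int (p - j0) \<le> delta_p rk (int (Suc n - k))"
    using eigen_block_DUc_bound V(1) unfolding p_def by blast
  have "delta_p rk (int (Suc n)) < delta_p rk (int (Suc n - k))"
    using dim j0(2) rank_card_mono[of n] delta_p_of_nat[of "Suc n"] by simp
  with delta_p_increase_imp k(1) have rk1: "r = 1 \<and> k = 1" by blast
  with k(2) have "- z = 2" by simp
  with rk1 show ?thesis by (metis minus_minus)
qed

lemma Smith_pencil_eval_minus_r_unit:
  assumes P: "P \<in> carrier_mat (rank_card (Suc n)) (rank_card (Suc n))"
    and Q: "Q \<in> carrier_mat (rank_card (Suc n)) (rank_card (Suc n))"
    and inv: "invertible_mat P" "invertible_mat Q"
    and S: "in_Smith_form (P * pencil (DU_mat rk (Suc n)) * Q)"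
  shows "poly ((P * pencil (DU_mat rk (Suc n)) * Q) $$ (rank_card n - 1, rank_card n - 1)) (- int r) dvd 1"
proof -
  define e where "e = (P * pencil (DU_mat rk (Suc n)) * Q) $$ (rank_card n - 1, rank_card n - 1)"
  have "rank_card n - 1 < rank_card (Suc n)" using rank_card_pos[of n] rank_card_mono[of n] by simp
  hence lc: "lead_coeff e dvd 1"
    unfolding e_def by (rule lead_coeff_Smith_pencil_unit[OF P Q inv DU_carrier S])
  have "poly (of_int_poly e) (- of_nat r) = lead_coeff (of_int_poly e :: complex poly)"
  proof (rule poly_eq_lead_coeff_if_roots)
    fix a :: complex assume "poly (of_int_poly e) a = 0"
    hence "r = 1 \<and> a = -2"
      using Smith_pencil_root[OF P Q inv S] unfolding e_def eval_complex_def by blast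
    thus "- of_nat r - a = 1" by simp
  qed
  moreover have "poly (of_int_poly e) (of_int (- int r)) = (of_int (poly e (- int r)) :: complex)"
    by (rule of_int_hom.poly_map_poly)
  ultimately have "(of_int (poly e (- int r)) :: complex) = of_int (lead_coeff e)" by simp
  hence "poly e (- int r) = lead_coeff e" by (simp only: of_int_eq_iff)
  thus ?thesis using lc unfolding e_def by simp
qed

lemma U_Smith_form_zero_one:
  assumes "has_Smith_form (pencil (DU_mat rk (Suc n)))"
  shows "\<exists>P Q. P \<in> carrier_mat (rank_card (Suc n)) (rank_card (Suc n)) \<and>
           Q \<in> carrier_mat (rank_card n) (rank_card n) \<and>
           invertible_mat P \<and> invertible_mat Q \<and>
           in_Smith_form (P * U_mat rk n * Q) \<and>
           (\<forall>i < min (rank_card (Suc n)) (rank_card n). (P * U_mat rk n * Q) $$ (i, i) \<in> {0, 1})"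
proof -
  define p where "p = rank_card (Suc n)"
  define q where "q = rank_card n"
  define M where "M = pencil (DU_mat rk (Suc n))"
  define g where "g = (\<lambda>f::int poly. poly f (- int r))"
  interpret eval_minus_r: comm_ring_hom g unfolding g_def by unfold_locales auto
  have Mc: "M \<in> carrier_mat p p" unfolding M_def p_def by (rule pencil_carrier[OF DU_carrier])
  obtain P Q where P: "P \<in> carrier_mat p p" and Q: "Q \<in> carrier_mat p p"
    and inv: "invertible_mat P" "invertible_mat Q" and S: "in_Smith_form (P * M * Q)"
    using assms Mc unfolding has_Smith_form_def M_def by auto
  have Sc: "P * M * Q \<in> carrier_mat p p" using P Mc Q by auto
  define X where "X = map_mat g P * U_mat rk n"
  define Y where "Y = D_mat rk n * map_mat g Q"
  have Xc: "X \<in> carrier_mat p q" and Yc: "Y \<in> carrier_mat q p"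
    unfolding X_def Y_def p_def q_def using P Q U_carrier[of n] D_carrier[of n]
    by (auto simp: p_def intro!: mult_carrier_mat)
  have XY: "X * Y = map_mat g (P * M * Q)"
    unfolding X_def Y_def g_def M_def
    by (rule eval_minus_r_Smith_decomposition) (use P Q in \<open>simp_all add: p_def\<close>)
  have q_le_p: "q \<le> p" and q_pos: "0 < q"
    using rank_card_mono rank_card_pos unfolding p_def q_def by simp_all
  have unit_j0: "g ((P * M * Q) $$ (q - 1, q - 1)) dvd 1"
    using Smith_pencil_eval_minus_r_unit[OF P[unfolded p_def] Q[unfolded p_def] inv]
      S unfolding g_def M_def q_def by simp
  have XY_Smith: "in_Smith_form (X * Y)" "X * Y \<in> carrier_mat p p"
    unfolding XY using eval_minus_r.in_Smith_form_hom[OF S] Sc by auto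
  obtain R where R: "R \<in> carrier_mat q q" "invertible_mat R"
    and XR: "X * R = mat p q (\<lambda>(i, j). if i = j then 1 else 0)"
  proof (rule identity_block_of_diagonal_product[OF Xc Yc q_le_p])
    show "(X * Y) $$ (i, j) = 0" if "i < p" "j < p" "i \<noteq> j" for i j
      using in_Smith_form_off_diag[OF XY_Smith] that by blast
    have "(X * Y) $$ (q - 1, q - 1) dvd 1"
      unfolding XY using unit_j0 q_le_p q_pos carrier_matD[OF Sc] by simp
    moreover have "(X * Y) $$ (j, j) dvd (X * Y) $$ (q - 1, q - 1)" if "j < q" for j
      by (rule in_Smith_form_diag_dvd[OF XY_Smith]) (use that q_le_p in auto)
    ultimately show "(X * Y) $$ (j, j) dvd 1" if "j < q" for j
      using that dvd_trans by blast
  qed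
  show ?thesis
  proof (intro exI conjI)
    show "map_mat g P \<in> carrier_mat (rank_card (Suc n)) (rank_card (Suc n))" using P p_def by simp
    show "invertible_mat (map_mat g P)" using eval_minus_r.invertible_mat_hom[OF P inv(1)] g_def by simp
    show "R \<in> carrier_mat (rank_card n) (rank_card n)" "invertible_mat R" using R q_def by simp_all
    show "in_Smith_form (map_mat g P * U_mat rk n * R)"
      unfolding X_def[symmetric] XR by (auto simp: in_Smith_form_def)
    show "\<forall>i < min (rank_card (Suc n)) (rank_card n). (map_mat g P * U_mat rk n * R) $$ (i, i) \<in> {0, 1}"
      unfolding X_def[symmetric] XR p_def q_def by simp
  qed
qed

end

theorem proposition2p5:
  fixes r :: nat and rk :: "'a::order \<Rightarrow> nat"
  assumes "differential_poset r rk"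
    and "\<forall>n::int. \<forall>j::int. 1 \<le> n \<and> 1 \<le> j \<and> j \<le> n \<longrightarrow>
           delta_p rk n \<ge> delta_p rk (n - j - (if r = 1 then 1 else 0))"
    and "\<forall>n. has_Smith_form
           (map_mat (\<lambda>a. [:a:]) (DU_mat rk n) + [:0, 1:] \<cdot>\<^sub>m 1\<^sub>m (card (rank_set rk n)))"
  shows "\<forall>n. \<exists>P Q. P \<in> carrier_mat (card (rank_set rk (Suc n))) (card (rank_set rk (Suc n))) \<and>
           Q \<in> carrier_mat (card (rank_set rk n)) (card (rank_set rk n)) \<and>
           invertible_mat P \<and> invertible_mat Q \<and>
           in_Smith_form (P * U_mat rk n * Q) \<and>
           (\<forall>i < min (card (rank_set rk (Suc n))) (card (rank_set rk n)).
              (P * U_mat rk n * Q) $$ (i,i) \<in> {0, 1})"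
proof
  fix n
  interpret growth_differential_poset r rk
    using assms(1,2) by unfold_locales
  show "\<exists>P Q. P \<in> carrier_mat (rank_card (Suc n)) (rank_card (Suc n)) \<and>
           Q \<in> carrier_mat (rank_card n) (rank_card n) \<and>
           invertible_mat P \<and> invertible_mat Q \<and>
           in_Smith_form (P * U_mat rk n * Q) \<and>
           (\<forall>i < min (rank_card (Suc n)) (rank_card n). (P * U_mat rk n * Q) $$ (i, i) \<in> {0, 1})"
    by (rule U_Smith_form_zero_one) (use assms(3) pencil_DU in metis)
qed

end
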